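(* Fix a node $u$ with $d_u\ge 1$ neighbors, let $\eta>0$, $\alpha>0$, $\rho\in(0,1)$, and let $\Theta$ be a finite set of models, each $\theta\in\Theta$ determining embeddings with $\|\mathrm{E}_w\|_2=1$ for every node $w$. For $\theta\in\Theta$ and $v\in\mathcal{N}(u)$ let $h(u,v;\theta)=\mathrm{E}_u^\top\mathrm{E}_u+d_u\,g(u,v;\theta)$, let $P_{u,\theta}^*(v)=P_u(v)\exp(g(u,v;\theta)/\alpha)/\mathbb{E}_{w\sim P_u}[\exp(g(u,w;\theta)/\alpha)]$, and assume that for every $\theta\in\Theta$, $P^*_{u,\theta}$ maximizes $\mathbb{E}_{v\sim P}[h(u,v;\theta)]$ over all distributions $P$ on $\mathcal{N}(u)$ with $D_{KL}(P,P_u)\le\eta$ (i.e. $\alpha$ is the optimal Lagrange multiplier of the constraint). Put $\mathcal{L}_{DRO\_smooth}(u;\theta)=\mathbb{E}_{v\sim P^*_{u,\theta}}[h(u,v;\theta)]$. Let $P_u^{ideal}$ be a distribution on $\mathcal{N}(u)$ with $D_{KL}(P_u^{ideal},P_u)\le\eta$ and $\mathcal{L}_{ideal}(u;\theta)=\mathbb{E}_{v\sim P_u^{ideal}}[h(u,v;\theta)]$. Let $X_1,\dots,X_{d_u}$ be independent random variables and for each $\theta\in\Theta$ let $\widetilde{\mathcal{L}}_{DRO\_smooth}(u;\theta)=f_\theta(X_1,\dots,X_{d_u})$ be an estimator with $\mathbb{E}[f_\theta(X_1,\dots,X_{d_u})]=\mathcal{L}_{DRO\_smooth}(u;\theta)$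 such that changing any single coordinate $X_i$ changes $f_\theta$ by at most $\max_{v\in\mathcal{N}(u)}P^*_{u,\theta}(v)\,|h(u,v;\theta)|$. Then with probability at least $1-\rho$, simultaneously for all $\theta\in\Theta$, $$\mathcal{L}_{ideal}(u;\theta)\le\widetilde{\mathcal{L}}_{DRO\_smooth}(u;\theta)+\mathcal{B}(\alpha,d_u,\rho),\qquad \mathcal{B}(\alpha,d_u,\rho)=\frac{(d_u+\sqrt{d_u})\,e^{2\sqrt{d_u}/\alpha}}{d_u-1+e^{2\sqrt{d_u}/\alpha}}\sqrt{\frac12\log\frac{|\Theta|}{\rho}}.$$
   Context: Setting: a user–item bipartite graph in which every node has degree at least 1; $\mathcal{N}(u)$ is the neighbor set of $u$, $d_u=|\mathcal{N}(u)|$, $d_v$ the degree of $v$, and $P_u$ is the uniform distribution on $\mathcal{N}(u)$. $g(u,v;\theta)=-\frac{\mathrm{E}_u^\top\mathrm{E}_v}{\sqrt{d_u}\sqrt{d_v}}$, where $\mathrm{E}_w\in\mathbb{R}^c$ is the embedding of node $w$ under model $\theta$. $D_{KL}(P,Q)=\sum_v P(v)\log\frac{P(v)}{Q(v)}$. *)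

theory Defs
  imports "HOL-Probability.Probability"
begin

definition nbrs :: "('n \<times> 'n) set \<Rightarrow> 'n \<Rightarrow> 'n set" where
  "nbrs G w = {v. (w, v) \<in> G}"

definition deg :: "('n \<times> 'n) set \<Rightarrow> 'n \<Rightarrow> nat" where
  "deg G w = card (nbrs G w)"

definition bipartite_graph :: "('n \<times> 'n) set \<Rightarrow> bool" where
  "bipartite_graph G \<longleftrightarrow> sym G
     \<and> (\<forall>w. finite (nbrs G w) \<and> deg G w \<ge> 1)
     \<and> (\<exists>side :: 'n \<Rightarrow> bool. \<forall>(a, b) \<in> G. side a \<noteq> side b)"

definition gfun :: "('n \<times> 'n) set \<Rightarrow> ('n \<Rightarrow> real ^ 'c) \<Rightarrow> 'n \<Rightarrow> 'n \<Rightarrow> real" where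
  "gfun G E u v = - (E u \<bullet> E v) / (sqrt (real (deg G u)) * sqrt (real (deg G v)))"

definition hfun :: "('n \<times> 'n) set \<Rightarrow> ('n \<Rightarrow> real ^ 'c) \<Rightarrow> 'n \<Rightarrow> 'n \<Rightarrow> real" where
  "hfun G E u v = E u \<bullet> E u + real (deg G u) * gfun G E u v"

definition unif_nbr :: "('n \<times> 'n) set \<Rightarrow> 'n \<Rightarrow> 'n \<Rightarrow> real" where
  "unif_nbr G u v = 1 / real (deg G u)"

definition is_dist :: "'n set \<Rightarrow> ('n \<Rightarrow> real) \<Rightarrow> bool" where
  "is_dist A P \<longleftrightarrow> (\<forall>v\<in>A. 0 \<le> P v) \<and> (\<Sum>v\<in>A. P v) = 1"

text \<open>KL divergence (natural log; 0 log 0 = 0 holds automatically since 0 * x = 0).\<close>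
definition KL :: "'n set \<Rightarrow> ('n \<Rightarrow> real) \<Rightarrow> ('n \<Rightarrow> real) \<Rightarrow> real" where
  "KL A P Q = (\<Sum>v\<in>A. P v * ln (P v / Q v))"

definition expect_on :: "'n set \<Rightarrow> ('n \<Rightarrow> real) \<Rightarrow> ('n \<Rightarrow> real) \<Rightarrow> real" where
  "expect_on A P h = (\<Sum>v\<in>A. P v * h v)"

definition Pstar :: "('n \<times> 'n) set \<Rightarrow> ('n \<Rightarrow> real ^ 'c) \<Rightarrow> real \<Rightarrow> 'n \<Rightarrow> 'n \<Rightarrow> real" where
  "Pstar G E \<alpha> u v = unif_nbr G u v * exp (gfun G E u v / \<alpha>)
     / expect_on (nbrs G u) (unif_nbr G u) (\<lambda>w. exp (gfun G E u w / \<alpha>))"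

definition kl_ball_maximizer ::
  "'n set \<Rightarrow> ('n \<Rightarrow> real) \<Rightarrow> real \<Rightarrow> ('n \<Rightarrow> real) \<Rightarrow> ('n \<Rightarrow> real) \<Rightarrow> bool" where
  "kl_ball_maximizer A P0 \<eta> h Q \<longleftrightarrow>
     is_dist A Q \<and> KL A Q P0 \<le> \<eta> \<and>
     (\<forall>P. is_dist A P \<and> KL A P P0 \<le> \<eta> \<longrightarrow> expect_on A P h \<le> expect_on A Q h)"

definition L_DRO_smooth :: "('n \<times> 'n) set \<Rightarrow> ('n \<Rightarrow> real ^ 'c) \<Rightarrow> real \<Rightarrow> 'n \<Rightarrow> real" where
  "L_DRO_smooth G E \<alpha> u = expect_on (nbrs G u) (Pstar G E \<alpha> u) (hfun G E u)"

definition L_ideal :: "('n \<times> 'n) set \<Rightarrow> ('n \<Rightarrow> real ^ 'c) \<Rightarrow> ('n \<Rightarrow> real) \<Rightarrow> 'n \<Rightarrow> real" where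
  "L_ideal G E Pid u = expect_on (nbrs G u) Pid (hfun G E u)"

text \<open>The bound B(alpha, d_u, rho) with |Theta| = k.\<close>
definition dro_bound :: "real \<Rightarrow> nat \<Rightarrow> real \<Rightarrow> nat \<Rightarrow> real" where
  "dro_bound \<alpha> d \<rho> k =
     (real d + sqrt (real d)) * exp (2 * sqrt (real d) / \<alpha>)
       / (real d - 1 + exp (2 * sqrt (real d) / \<alpha>))
     * sqrt (1/2 * ln (real k / \<rho>))"

end

theory Submission
  imports Defs
begin

(*
  Since P*_{u,theta} maximises the expected h over the KL ball, which contains P_u^ideal, we have
  L_ideal <= L_DRO_smooth = E[f_theta]; so it suffices that no estimator falls more than B below
  its mean. P*_{u,theta} is a softmax of values g in [-1, 1], hence
  P*_{u,theta}(v) <= e/(d_u - 1 + e) with e = exp(2 sqrt d_u / alpha), and |h| <= 1 + sqrt d_u,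
  so each f_theta has bounded differences c = e (1 + sqrt d_u)/(d_u - 1 + e). McDiarmid's
  inequality -- proved below by peeling off one coordinate at a time with Fubini and Hoeffding's
  lemma -- bounds the lower tail by exp(-2 B^2/(d_u c^2)), which equals rho/|Theta| for
  B = B(alpha, d_u, rho). A union bound over Theta finishes the proof.
*)

definition bounded_differences ::
  "nat \<Rightarrow> (nat \<Rightarrow> 'b set) \<Rightarrow> ((nat \<Rightarrow> 'b) \<Rightarrow> real) \<Rightarrow> real \<Rightarrow> bool" where
  "bounded_differences n A f C \<longleftrightarrow>
     (\<forall>x\<in>PiE {..<n} A. \<forall>y\<in>PiE {..<n} A. \<forall>i<n.
        (\<forall>j\<in>{..<n} - {i}. x j = y j) \<longrightarrow> \<bar>f x - f y\<bar> \<le> C)"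

lemma bounded_differences_uminus:
  "bounded_differences n A f C \<Longrightarrow> bounded_differences n A (\<lambda>x. - f x) C"
  unfolding bounded_differences_def by (metis abs_minus_commute minus_diff_eq minus_diff_minus)

lemma bounded_differences_diameter:
  assumes bd: "bounded_differences n A f C"
    and x: "x \<in> PiE {..<n} A" and y: "y \<in> PiE {..<n} A"
  shows "\<bar>f x - f y\<bar> \<le> real n * C"
proof -
  define z where "z k = restrict (\<lambda>i. if i < k then y i else x i) {..<n}" for k
  have z: "z k \<in> PiE {..<n} A" for k
    using x y by (auto simp: z_def PiE_iff)
  have z0: "z 0 = x" and zn: "z n = y"
    using x y by (auto simp: z_def fun_eq_iff PiE_iff extensional_def)
  have "\<bar>f x - f (z k)\<bar> \<le> real k * C" if "k \<le> n" for k
    using that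
  proof (induction k)
    case 0
    then show ?case by (simp add: z0)
  next
    case (Suc k)
    have "\<forall>j\<in>{..<n} - {k}. z k j = z (Suc k) j"
      by (auto simp: z_def)
    then have "\<bar>f (z k) - f (z (Suc k))\<bar> \<le> C"
      using bd z Suc.prems unfolding bounded_differences_def by (meson Suc_le_lessD)
    with Suc show ?case by (simp add: algebra_simps)
  qed
  from this[of n] show ?thesis by (simp add: zn)
qed

lemma bounded_differences_fun_upd:
  assumes bd: "bounded_differences (Suc n) A f C" and y: "y \<in> A n"
  shows "bounded_differences n A (\<lambda>x. f (x(n := y))) C"
  unfolding bounded_differences_def
proof (intro ballI allI impI)
  fix x x' i
  assume x: "x \<in> PiE {..<n} A" and x': "x' \<in> PiE {..<n} A" and i: "i < n"
    and eq: "\<forall>j\<in>{..<n} - {i}. x j = x' j"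
  have "x(n := y) \<in> PiE {..<Suc n} A" "x'(n := y) \<in> PiE {..<Suc n} A"
    using x x' y by (auto simp: PiE_iff extensional_def)
  moreover have "\<forall>j\<in>{..<Suc n} - {i}. (x(n := y)) j = (x'(n := y)) j"
    using eq by auto
  ultimately show "\<bar>f (x(n := y)) - f (x'(n := y))\<bar> \<le> C"
    using bd i unfolding bounded_differences_def by (meson less_SucI)
qed

lemma bounded_differences_fun_upd_last:
  assumes bd: "bounded_differences (Suc n) A f C"
    and x: "x \<in> PiE {..<n} A" and y: "y \<in> A n" "y' \<in> A n"
  shows "\<bar>f (x(n := y)) - f (x(n := y'))\<bar> \<le> C"
proof -
  have "x(n := y) \<in> PiE {..<Suc n} A" "x(n := y') \<in> PiE {..<Suc n} A"
    using x y by (auto simp: PiE_iff extensional_def)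
  moreover have "\<forall>j\<in>{..<Suc n} - {n}. (x(n := y)) j = (x(n := y')) j"
    by auto
  ultimately show ?thesis
    using bd unfolding bounded_differences_def by blast
qed

lemma (in prob_space) integrable_bounded_oscillation:
  fixes h :: "'a \<Rightarrow> real"
  assumes h: "h \<in> borel_measurable M"
    and osc: "\<And>x y. x \<in> space M \<Longrightarrow> y \<in> space M \<Longrightarrow> \<bar>h x - h y\<bar> \<le> C"
  shows "integrable M h"
proof -
  obtain x0 where x0: "x0 \<in> space M"
    using not_empty by blast
  show ?thesis
  proof (rule integrable_const_bound[where B = "\<bar>h x0\<bar> + C"])
    show "AE x in M. norm (h x) \<le> \<bar>h x0\<bar> + C"
      using osc[OF _ x0] by (intro AE_I2) force
  qed (fact h)
qed

lemma (in prob_space) Hoeffdings_lemma_bounded_oscillation: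
  fixes h :: "'a \<Rightarrow> real"
  assumes h: "h \<in> borel_measurable M"
    and osc: "\<And>x y. x \<in> space M \<Longrightarrow> y \<in> space M \<Longrightarrow> \<bar>h x - h y\<bar> \<le> C"
    and l: "l > 0"
  shows "(\<integral>\<^sup>+x. ennreal (exp (l * (h x - expectation h))) \<partial>M) \<le> ennreal (exp (l\<^sup>2 * C\<^sup>2 / 8))"
proof -
  obtain x0 where x0: "x0 \<in> space M"
    using not_empty by blast
  define a where "a = (INF x\<in>space M. h x)"
  have bdd: "bdd_below (h ` space M)"
    using osc[OF _ x0] by (intro bdd_belowI[where m = "h x0 - C"]) (force simp: abs_le_iff)
  have "h x \<in> {a..a + C}" if x: "x \<in> space M" for x
  proof -
    have "a \<le> h x"
      unfolding a_def using bdd x by (intro cInf_lower) auto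
    moreover have "h x - C \<le> a"
      unfolding a_def using not_empty by (intro cInf_greatest) (auto simp: abs_le_iff dest!: osc[OF x])
    ultimately show ?thesis by simp
  qed
  then have "interval_bounded_random_variable M h a (a + C)"
    by unfold_locales (auto intro: AE_I2 h)
  from interval_bounded_random_variable.Hoeffdings_lemma_nn_integral[OF this l]
  show ?thesis by simp
qed

lemma (in prob_space) bounded_differences_integral:
  fixes F :: "(nat \<Rightarrow> 'b) \<Rightarrow> 'a \<Rightarrow> real"
  assumes bd: "\<And>y. y \<in> space M \<Longrightarrow> bounded_differences n A (\<lambda>x. F x y) C"
    and int: "\<And>x. x \<in> PiE {..<n} A \<Longrightarrow> integrable M (F x)"
  shows "bounded_differences n A (\<lambda>x. \<integral>y. F x y \<partial>M) C"
  unfolding bounded_differences_def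
proof (intro ballI allI impI)
  fix x x' i
  assume x: "x \<in> PiE {..<n} A" and x': "x' \<in> PiE {..<n} A" and i: "i < n"
    and eq: "\<forall>j\<in>{..<n} - {i}. x j = x' j"
  have "\<bar>F x y - F x' y\<bar> \<le> C" if "y \<in> space M" for y
    using bd[OF that] x x' i eq unfolding bounded_differences_def by blast
  then have "\<bar>\<integral>y. F x y - F x' y \<partial>M\<bar> \<le> (\<integral>y. C \<partial>M)"
    using int[OF x] int[OF x']
    by (intro order_trans[OF integral_abs_bound] integral_mono) auto
  then show "\<bar>(\<integral>y. F x y \<partial>M) - (\<integral>y. F x' y \<partial>M)\<bar> \<le> C"
    using int[OF x] int[OF x'] by (simp add: prob_space)
qed

lemma integrable_bounded_differences:
  assumes N: "\<And>i. prob_space (N i)"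
    and f: "f \<in> borel_measurable (PiM {..<n} N)"
    and bd: "bounded_differences n (\<lambda>i. space (N i)) f C"
  shows "integrable (PiM {..<n} N) f"
proof -
  interpret P: prob_space "PiM {..<n} N"
    by (intro prob_space_PiM N)
  show ?thesis
    using f bounded_differences_diameter[OF bd]
    by (intro P.integrable_bounded_oscillation) (auto simp: space_PiM)
qed

lemma measurable_fun_upd_section:
  assumes x: "x \<in> space (PiM I N)" and i: "i \<notin> I"
    and f: "f \<in> borel_measurable (PiM (insert i I) N)"
  shows "(\<lambda>y. f (x(i := y))) \<in> borel_measurable (N i)"
  using measurable_comp[OF measurable_component_update[OF x i] f] by (simp add: comp_def)

lemma borel_measurable_integral_fun_upd:
  fixes f :: "('i \<Rightarrow> 'a) \<Rightarrow> real"
  assumes "sigma_finite_measure (N i)"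
    and f: "f \<in> borel_measurable (PiM (insert i I) N)"
  shows "(\<lambda>x. \<integral>y. f (x(i := y)) \<partial>N i) \<in> borel_measurable (PiM I N)"
proof -
  have "(\<lambda>(x, y). f (x(i := y))) \<in> borel_measurable (PiM I N \<Otimes>\<^sub>M N i)"
    using measurable_comp[OF measurable_add_dim f] by (simp add: comp_def case_prod_beta')
  then show ?thesis
    by (rule sigma_finite_measure.borel_measurable_lebesgue_integral[OF assms(1)])
qed

lemma nn_integral_exp_PiM_insert_le:
  fixes f :: "('i \<Rightarrow> 'a) \<Rightarrow> real"
  assumes N: "\<And>j. prob_space (N j)" and I: "finite I" "i \<notin> I"
    and f: "f \<in> borel_measurable (PiM (insert i I) N)"
    and K: "\<And>x. x \<in> space (PiM I N) \<Longrightarrow>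
      (\<integral>\<^sup>+y. ennreal (exp (l * (f (x(i := y)) - (\<integral>y. f (x(i := y)) \<partial>N i)))) \<partial>N i) \<le> K"
  shows "(\<integral>\<^sup>+z. ennreal (exp (l * (f z - c))) \<partial>PiM (insert i I) N)
    \<le> (\<integral>\<^sup>+x. ennreal (exp (l * ((\<integral>y. f (x(i := y)) \<partial>N i) - c))) \<partial>PiM I N) * K"
proof -
  interpret product_prob_space N I
    by (rule product_prob_spaceI) (fact N)
  define g where "g x = (\<integral>y. f (x(i := y)) \<partial>N i)" for x
  have g: "g \<in> borel_measurable (PiM I N)"
    unfolding g_def by (rule borel_measurable_integral_fun_upd[OF _ f]) unfold_locales
  have "(\<integral>\<^sup>+z. ennreal (exp (l * (f z - c))) \<partial>PiM (insert i I) N)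
      = (\<integral>\<^sup>+x. (\<integral>\<^sup>+y. ennreal (exp (l * (f (x(i := y)) - c))) \<partial>N i) \<partial>PiM I N)"
    using f I by (intro product_nn_integral_insert) auto
  also have "\<dots> = (\<integral>\<^sup>+x. ennreal (exp (l * (g x - c)))
      * (\<integral>\<^sup>+y. ennreal (exp (l * (f (x(i := y)) - g x))) \<partial>N i) \<partial>PiM I N)"
  proof (rule nn_integral_cong)
    fix x assume x: "x \<in> space (PiM I N)"
    have "(\<lambda>y. f (x(i := y))) \<in> borel_measurable (N i)"
      by (rule measurable_fun_upd_section[OF x I(2) f])
    moreover have "exp (l * (f (x(i := y)) - c)) = exp (l * (g x - c)) * exp (l * (f (x(i := y)) - g x))"
      for y by (simp flip: exp_add add: algebra_simps)
    ultimately show "(\<integral>\<^sup>+y. ennreal (exp (l * (f (x(i := y)) - c))) \<partial>N i)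
      = ennreal (exp (l * (g x - c))) * (\<integral>\<^sup>+y. ennreal (exp (l * (f (x(i := y)) - g x))) \<partial>N i)"
      by (simp add: ennreal_mult flip: nn_integral_cmult)
  qed
  also have "\<dots> \<le> (\<integral>\<^sup>+x. ennreal (exp (l * (g x - c))) * K \<partial>PiM I N)"
    using K by (intro nn_integral_mono mult_left_mono) (auto simp: g_def)
  also have "\<dots> = (\<integral>\<^sup>+x. ennreal (exp (l * (g x - c))) \<partial>PiM I N) * K"
    using g by (intro nn_integral_multc) auto
  finally show ?thesis
    by (simp add: g_def)
qed

lemma last_coordinate_section:
  assumes f: "f \<in> borel_measurable (PiM {..<Suc n} N)"
    and bd: "bounded_differences (Suc n) (\<lambda>i. space (N i)) f C"
    and x: "x \<in> space (PiM {..<n} N)"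
  shows "(\<lambda>y. f (x(n := y))) \<in> borel_measurable (N n)"
    and "\<And>y y'. y \<in> space (N n) \<Longrightarrow> y' \<in> space (N n) \<Longrightarrow> \<bar>f (x(n := y)) - f (x(n := y'))\<bar> \<le> C"
  using measurable_fun_upd_section[OF x _ f[unfolded lessThan_Suc]] x bd
  by (auto simp: space_PiM intro: bounded_differences_fun_upd_last)

lemma integrate_last_coordinate:
  fixes N :: "nat \<Rightarrow> 'a measure" and f :: "(nat \<Rightarrow> 'a) \<Rightarrow> real" and n :: nat
  defines "g \<equiv> \<lambda>x. \<integral>y. f (x(n := y)) \<partial>N n"
  assumes N: "\<And>i. prob_space (N i)"
    and f: "f \<in> borel_measurable (PiM {..<Suc n} N)"
    and bd: "bounded_differences (Suc n) (\<lambda>i. space (N i)) f C"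
  shows "g \<in> borel_measurable (PiM {..<n} N)"
    and "bounded_differences n (\<lambda>i. space (N i)) g C"
    and "(\<integral>x. f x \<partial>PiM {..<Suc n} N) = (\<integral>x. g x \<partial>PiM {..<n} N)"
proof -
  interpret product_prob_space N "{..<n}"
    by (rule product_prob_spaceI) (fact N)
  show "g \<in> borel_measurable (PiM {..<n} N)"
    unfolding g_def using f
    by (intro borel_measurable_integral_fun_upd) (unfold_locales, simp add: lessThan_Suc)
  note sections = last_coordinate_section[OF f bd]
  show "bounded_differences n (\<lambda>i. space (N i)) g C"
    unfolding g_def using bd sections
    by (intro M.bounded_differences_integral bounded_differences_fun_upd M.integrable_bounded_oscillation)
      (auto simp: space_PiM)
  have "integrable (PiM (insert n {..<n}) N) f"
    using integrable_bounded_differences[OF N f bd] by (simp add: lessThan_Suc)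
  then show "(\<integral>x. f x \<partial>PiM {..<Suc n} N) = (\<integral>x. g x \<partial>PiM {..<n} N)"
    by (simp add: lessThan_Suc g_def product_integral_insert)
qed

lemma mcdiarmid_exp_moment:
  fixes f :: "(nat \<Rightarrow> 'a) \<Rightarrow> real"
  assumes N: "\<And>i. prob_space (N i)" and l: "l > 0"
    and f: "f \<in> borel_measurable (PiM {..<n} N)"
    and bd: "bounded_differences n (\<lambda>i. space (N i)) f C"
  shows "(\<integral>\<^sup>+x. ennreal (exp (l * (f x - (\<integral>x. f x \<partial>PiM {..<n} N)))) \<partial>PiM {..<n} N)
    \<le> ennreal (exp (l\<^sup>2 * real n * C\<^sup>2 / 8))"
  using f bd
proof (induction n arbitrary: f)
  case 0
  interpret P: prob_space "PiM ({} :: nat set) N"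
    by (intro prob_space_PiM N)
  have space: "space (PiM {..<0} N) = {\<lambda>_. undefined}"
    by (simp add: space_PiM_empty)
  then have "(\<integral>x. f x \<partial>PiM {..<0} N) = (\<integral>x. f (\<lambda>_. undefined) \<partial>PiM {..<0} N)"
    by (intro Bochner_Integration.integral_cong) auto
  then have "(\<integral>x. f x \<partial>PiM {..<0} N) = f (\<lambda>_. undefined)"
    by (simp add: P.prob_space)
  then have "(\<integral>\<^sup>+x. ennreal (exp (l * (f x - (\<integral>x. f x \<partial>PiM {..<0} N)))) \<partial>PiM {..<0} N)
      = (\<integral>\<^sup>+x. 1 \<partial>PiM {..<0} N)"
    using space by (intro nn_integral_cong) auto
  then show ?case
    by (simp add: P.emeasure_space_1)
next
  case (Suc n)
  define g where "g = (\<lambda>x. \<integral>y. f (x(n := y)) \<partial>N n)"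
  have g_apply: "g x = (\<integral>y. f (x(n := y)) \<partial>N n)" for x
    by (simp add: g_def)
  note g = integrate_last_coordinate[OF N Suc.prems, folded g_def]
  have Hoeffding: "(\<integral>\<^sup>+y. ennreal (exp (l * (f (x(n := y)) - g x))) \<partial>N n) \<le> ennreal (exp (l\<^sup>2 * C\<^sup>2 / 8))"
    if "x \<in> space (PiM {..<n} N)" for x
    unfolding g_def using last_coordinate_section[OF Suc.prems that] l
    by (rule prob_space.Hoeffdings_lemma_bounded_oscillation[OF N])
  have "(\<integral>\<^sup>+x. ennreal (exp (l * (f x - (\<integral>x. f x \<partial>PiM {..<Suc n} N)))) \<partial>PiM {..<Suc n} N)
      \<le> (\<integral>\<^sup>+x. ennreal (exp (l * (g x - (\<integral>x. g x \<partial>PiM {..<n} N)))) \<partial>PiM {..<n} N)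
        * ennreal (exp (l\<^sup>2 * C\<^sup>2 / 8))"
    using nn_integral_exp_PiM_insert_le[OF N _ _ Suc.prems(1)[unfolded lessThan_Suc] Hoeffding[unfolded g_apply],
        where c = "\<integral>x. g x \<partial>PiM {..<n} N", folded g_apply]
    unfolding g(3) by (simp add: lessThan_Suc)
  also have "\<dots> \<le> ennreal (exp (l\<^sup>2 * real n * C\<^sup>2 / 8)) * ennreal (exp (l\<^sup>2 * C\<^sup>2 / 8))"
    by (intro mult_right_mono Suc.IH[OF g(1,2)]) auto
  also have "\<dots> = ennreal (exp (l\<^sup>2 * real (Suc n) * C\<^sup>2 / 8))"
    by (simp flip: ennreal_mult exp_add add: algebra_simps)
  finally show ?case .
qed

lemma mcdiarmid_lower_tail:
  fixes f :: "(nat \<Rightarrow> 'a) \<Rightarrow> real"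
  assumes N: "\<And>i. prob_space (N i)"
    and f: "f \<in> borel_measurable (PiM {..<n} N)"
    and bd: "bounded_differences n (\<lambda>i. space (N i)) f C"
    and t: "t > 0" and n: "n > 0" and C: "C > 0"
  shows "measure (PiM {..<n} N) {x \<in> space (PiM {..<n} N). f x \<le> (\<integral>x. f x \<partial>PiM {..<n} N) - t}
    \<le> exp (-2 * t\<^sup>2 / (real n * C\<^sup>2))"
proof -
  let ?P = "PiM {..<n} N"
  interpret P: prob_space ?P
    by (intro prob_space_PiM N)
  define E where "E = (\<integral>x. f x \<partial>?P)"
  define v where "v = real n * C\<^sup>2"
  \<comment> \<open>Chernoff's bound with the minimiser of \<open>v l\<^sup>2 / 8 - l t\<close>.\<close>
  define l where "l = 4 * t / v"
  have v: "v > 0" and l: "l > 0"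
    using n C t by (simp_all add: v_def l_def)
  have "ennreal (measure ?P {x \<in> space ?P. f x \<le> E - t})
      = emeasure ?P {x \<in> space ?P. - f x - (- E) \<ge> t}"
    by (simp add: P.emeasure_eq_measure algebra_simps)
  also have "\<dots> \<le> ennreal (exp (- l * t)) *
      (\<integral>\<^sup>+x. ennreal (exp (l * (- f x - (- E)))) * indicator (space ?P) x \<partial>?P)"
    using f by (intro Chernoff_ineq_nn_integral_ge l) auto
  also have "(\<integral>\<^sup>+x. ennreal (exp (l * (- f x - (- E)))) * indicator (space ?P) x \<partial>?P)
      = (\<integral>\<^sup>+x. ennreal (exp (l * (- f x - (\<integral>x. - f x \<partial>?P)))) \<partial>?P)"
    by (intro nn_integral_cong) (simp add: E_def)
  also have "ennreal (exp (- l * t)) * \<dots> \<le> ennreal (exp (- l * t)) * ennreal (exp (l\<^sup>2 * real n * C\<^sup>2 / 8))"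
    using f bounded_differences_uminus[OF bd]
    by (intro mult_left_mono mcdiarmid_exp_moment[OF N l]) auto
  also have "\<dots> = ennreal (exp (v * l\<^sup>2 / 8 - l * t))"
    by (simp flip: ennreal_mult exp_add add: v_def algebra_simps)
  also have "v * l\<^sup>2 / 8 - l * t = -2 * t\<^sup>2 / v"
    using v by (simp add: l_def field_simps power2_eq_square)
  finally show ?thesis
    by (subst (asm) ennreal_le_iff) (simp_all add: v_def E_def)
qed

lemma (in prob_space) measurable_restrict_indep_vars:
  "indep_vars M' X I \<Longrightarrow> (\<lambda>\<omega>. \<lambda>i\<in>I. X i \<omega>) \<in> measurable M (PiM I M')"
  unfolding indep_vars_def by (auto intro: measurable_restrict)

lemma (in prob_space) distr_indep_vars_PiM:
  assumes indep: "indep_vars (\<lambda>_. S) X {..<n}" and n: "n > 0"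
  obtains N where "\<And>i. prob_space (N i)" "\<And>i. i < n \<Longrightarrow> space (N i) = space S"
    and "distr M (PiM {..<n} (\<lambda>_. S)) (\<lambda>\<omega>. \<lambda>i\<in>{..<n}. X i \<omega>) = PiM {..<n} N"
proof -
  have X: "X i \<in> measurable M S" if "i < n" for i
    using indep that unfolding indep_vars_def by auto
  obtain \<omega>0 where "\<omega>0 \<in> space M"
    using not_empty by blast
  then have s0: "X 0 \<omega>0 \<in> space S"
    using X[OF n] by (simp add: measurable_space)
  \<comment> \<open>The factors beyond \<open>n\<close> only have to be probability spaces; any Dirac measure will do.\<close>
  define N where "N i = (if i < n then distr M S (X i) else return S (X 0 \<omega>0))" for i
  have "distr M (PiM {..<n} (\<lambda>_. S)) (\<lambda>\<omega>. \<lambda>i\<in>{..<n}. X i \<omega>) = PiM {..<n} (\<lambda>i. distr M S (X i))"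
    using indep_vars_iff_distr_eq_PiM'[where I = "{..<n}" and M' = "\<lambda>_. S" and X = X] indep X n
    by (metis empty_iff lessThan_iff)
  also have "\<dots> = PiM {..<n} N"
    by (rule PiM_cong) (simp_all add: N_def)
  finally have "distr M (PiM {..<n} (\<lambda>_. S)) (\<lambda>\<omega>. \<lambda>i\<in>{..<n}. X i \<omega>) = PiM {..<n} N" .
  moreover have "prob_space (N i)" for i
    by (simp add: N_def prob_space_distr X prob_space_return s0)
  ultimately show ?thesis
    by (intro that[of N]) (simp_all add: N_def)
qed

lemma (in prob_space) mcdiarmid_indep_vars:
  fixes f :: "(nat \<Rightarrow> 'b) \<Rightarrow> real"
  assumes indep: "indep_vars (\<lambda>_. S) X {..<n}" and n: "n > 0"
    and f: "f \<in> borel_measurable (PiM {..<n} (\<lambda>_. S))"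
    and bd: "bounded_differences n (\<lambda>_. space S) f C" and t: "t > 0" and C: "C > 0"
  shows "prob {\<omega> \<in> space M. f (\<lambda>i\<in>{..<n}. X i \<omega>)
      \<le> expectation (\<lambda>\<omega>. f (\<lambda>i\<in>{..<n}. X i \<omega>)) - t}
    \<le> exp (-2 * t\<^sup>2 / (real n * C\<^sup>2))"
proof -
  define Y where "Y \<omega> = (\<lambda>i\<in>{..<n}. X i \<omega>)" for \<omega>
  have Y: "Y \<in> measurable M (PiM {..<n} (\<lambda>_. S))"
    unfolding Y_def by (rule measurable_restrict_indep_vars[OF indep])
  obtain N where N: "\<And>i. prob_space (N i)" and space_N: "\<And>i. i < n \<Longrightarrow> space (N i) = space S"
    and distr_Y: "distr M (PiM {..<n} (\<lambda>_. S)) Y = PiM {..<n} N"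
    using distr_indep_vars_PiM[OF indep n] unfolding Y_def by metis
  have f_N: "f \<in> borel_measurable (PiM {..<n} N)"
    using f by (simp flip: distr_Y)
  have "PiE {..<n} (\<lambda>i. space (N i)) = PiE {..<n} (\<lambda>_. space S)"
    by (rule PiE_cong) (simp add: space_N)
  then have bd_N: "bounded_differences n (\<lambda>i. space (N i)) f C"
    using bd by (simp add: bounded_differences_def)
  have E: "expectation (\<lambda>\<omega>. f (Y \<omega>)) = (\<integral>x. f x \<partial>PiM {..<n} N)"
    using integral_distr[OF Y f] by (simp add: distr_Y)
  define A where "A = {x \<in> space (PiM {..<n} N). f x \<le> (\<integral>x. f x \<partial>PiM {..<n} N) - t}"
  have space_PiM_N: "space (PiM {..<n} N) = space (PiM {..<n} (\<lambda>_. S))"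
    by (metis distr_Y space_distr)
  have A: "A \<in> sets (PiM {..<n} (\<lambda>_. S))"
    using f unfolding A_def space_PiM_N by measurable
  have "measure (PiM {..<n} N) A = prob (Y -` A \<inter> space M)"
    using measure_distr[OF Y A] by (simp add: distr_Y)
  also have "Y -` A \<inter> space M = {\<omega> \<in> space M. f (Y \<omega>) \<le> expectation (\<lambda>\<omega>. f (Y \<omega>)) - t}"
    using measurable_space[OF Y] by (auto simp: A_def E space_PiM_N)
  finally have "measure (PiM {..<n} N) A = prob {\<omega> \<in> space M. f (Y \<omega>) \<le> expectation (\<lambda>\<omega>. f (Y \<omega>)) - t}" .
  then show ?thesis
    using mcdiarmid_lower_tail[OF N f_N bd_N t n C] by (simp add: A_def Y_def)
qed

lemma (in prob_space) prob_Ball_ge: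
  assumes fin: "finite I"
    and ev: "\<And>i. i \<in> I \<Longrightarrow> {x \<in> space M. P i x} \<in> events"
    and bad: "\<And>i. i \<in> I \<Longrightarrow> prob {x \<in> space M. \<not> P i x} \<le> \<delta>"
  shows "prob {x \<in> space M. \<forall>i\<in>I. P i x} \<ge> 1 - real (card I) * \<delta>"
proof -
  define B where "B i = {x \<in> space M. \<not> P i x}" for i
  have B: "B i \<in> events" if "i \<in> I" for i
  proof -
    have "B i = space M - {x \<in> space M. P i x}"
      by (auto simp: B_def)
    then show ?thesis
      using ev[OF that] by auto
  qed
  have "prob (\<Union>i\<in>I. B i) \<le> (\<Sum>i\<in>I. prob (B i))"
    using fin B by (intro finite_measure_subadditive_finite) auto
  also have "\<dots> \<le> real (card I) * \<delta>"
    using bad by (intro sum_bounded_above) (simp add: B_def)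
  finally have "prob (\<Union>i\<in>I. B i) \<le> real (card I) * \<delta>" .
  moreover have "{x \<in> space M. \<forall>i\<in>I. P i x} = space M - (\<Union>i\<in>I. B i)"
    by (auto simp: B_def)
  moreover have "(\<Union>i\<in>I. B i) \<in> events"
    using fin B by auto
  ultimately show ?thesis
    by (simp add: prob_compl)
qed

lemma softmax_le:
  fixes s :: "'a \<Rightarrow> real"
  assumes A: "finite A" "v \<in> A" and gap: "\<And>w. w \<in> A \<Longrightarrow> s v - s w \<le> D"
  shows "exp (s v) / (\<Sum>w\<in>A. exp (s w)) \<le> exp D / (real (card A) - 1 + exp D)"
proof -
  have card: "1 \<le> card A"
    using A by (auto simp: Suc_le_eq card_gt_0_iff)
  have "real (card (A - {v})) * exp (s v - D) \<le> (\<Sum>w\<in>A - {v}. exp (s w))"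
    using gap by (intro sum_bounded_below) (simp add: algebra_simps)
  moreover have "real (card (A - {v})) = real (card A) - 1"
    using A card by (simp add: of_nat_diff)
  ultimately have "(real (card A) - 1) * exp (s v - D) \<le> (\<Sum>w\<in>A - {v}. exp (s w))"
    by simp
  then have "exp D * ((real (card A) - 1) * exp (s v - D)) \<le> exp D * (\<Sum>w\<in>A - {v}. exp (s w))"
    by (rule mult_left_mono) simp
  moreover have "exp D * ((real (card A) - 1) * exp (s v - D)) = (real (card A) - 1) * exp (s v)"
    by (simp add: mult.left_commute flip: exp_add)
  ultimately have rest: "(real (card A) - 1) * exp (s v) \<le> exp D * (\<Sum>w\<in>A - {v}. exp (s w))"
    by simp
  have sum: "(\<Sum>w\<in>A. exp (s w)) = exp (s v) + (\<Sum>w\<in>A - {v}. exp (s w))"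
    by (rule sum.remove[OF A])
  have "exp (s v) * (real (card A) - 1 + exp D) \<le> exp D * (\<Sum>w\<in>A. exp (s w))"
    using rest unfolding sum by (simp add: algebra_simps)
  moreover have "0 < (\<Sum>w\<in>A. exp (s w))"
    unfolding sum by (simp add: add_pos_nonneg sum_nonneg)
  moreover have "0 < real (card A) - 1 + exp D"
    using card by (simp add: add_nonneg_pos)
  ultimately show ?thesis
    by (simp add: divide_simps mult.commute)
qed


lemma Pstar_eq_softmax:
  assumes "deg G u > 0"
  shows "Pstar G E \<alpha> u v = exp (gfun G E u v / \<alpha>) / (\<Sum>w\<in>nbrs G u. exp (gfun G E u w / \<alpha>))"
  using assms by (simp add: Pstar_def unif_nbr_def expect_on_def flip: sum_divide_distrib)

lemma abs_gfun_le:
  assumes "norm (E u) = 1" "norm (E v) = 1" "deg G u \<ge> 1" "deg G v \<ge> 1"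
  shows "\<bar>gfun G E u v\<bar> \<le> 1 / sqrt (real (deg G u))"
proof -
  have "\<bar>E u \<bullet> E v\<bar> \<le> 1"
    using Cauchy_Schwarz_ineq2[of "E u" "E v"] assms by simp
  moreover have "1 \<le> sqrt (real (deg G u))" "1 \<le> sqrt (real (deg G v))"
    using assms by auto
  ultimately have "\<bar>E u \<bullet> E v\<bar> / (sqrt (real (deg G u)) * sqrt (real (deg G v)))
      \<le> 1 / (sqrt (real (deg G u)) * 1)"
    by (intro frac_le mult_left_mono) auto
  then show ?thesis
    by (simp add: gfun_def abs_mult)
qed

lemma abs_hfun_le:
  assumes "norm (E u) = 1" "norm (E v) = 1" "deg G u \<ge> 1" "deg G v \<ge> 1"
  shows "\<bar>hfun G E u v\<bar> \<le> 1 + sqrt (real (deg G u))"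
proof -
  have d: "real (deg G u) > 0"
    using assms by simp
  have "\<bar>real (deg G u) * gfun G E u v\<bar> = real (deg G u) * \<bar>gfun G E u v\<bar>"
    by (simp add: abs_mult)
  also have "\<dots> \<le> real (deg G u) * (1 / sqrt (real (deg G u)))"
    using abs_gfun_le[OF assms] by (rule mult_left_mono) simp
  also have "\<dots> = sqrt (real (deg G u))"
    using d by (simp add: real_div_sqrt)
  finally show ?thesis
    using assms(1) by (simp add: hfun_def flip: power2_norm_eq_inner)
qed

definition dro_diff_bound :: "real \<Rightarrow> nat \<Rightarrow> real" where
  "dro_diff_bound \<alpha> d =
     exp (2 * sqrt (real d) / \<alpha>) / (real d - 1 + exp (2 * sqrt (real d) / \<alpha>)) * (1 + sqrt (real d))"

lemma dro_diff_bound_pos: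
  assumes "d \<ge> 1"
  shows "dro_diff_bound \<alpha> d > 0"
proof -
  have "real d - 1 + exp (2 * sqrt (real d) / \<alpha>) > 0"
    using assms by (simp add: add_nonneg_pos)
  then show ?thesis
    unfolding dro_diff_bound_def by (intro mult_pos_pos divide_pos_pos) (auto simp: add_pos_nonneg)
qed

lemma Max_Pstar_abs_hfun_le:
  assumes G: "bipartite_graph G" and unit: "\<forall>w. norm (E w) = 1" and \<alpha>: "\<alpha> > 0"
  shows "Max ((\<lambda>v. Pstar G E \<alpha> u v * \<bar>hfun G E u v\<bar>) ` nbrs G u) \<le> dro_diff_bound \<alpha> (deg G u)"
proof -
  have fin: "finite (nbrs G u)" and deg: "\<And>w. deg G w \<ge> 1"
    using G by (auto simp: bipartite_graph_def)
  let ?d = "real (deg G u)"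
  have "1 / sqrt ?d \<le> 1"
    using deg[of u] by simp
  then have g: "\<bar>gfun G E u w\<bar> \<le> 1" for w
    using abs_gfun_le[of E u w G] unit deg by simp
  have "Pstar G E \<alpha> u v * \<bar>hfun G E u v\<bar> \<le> dro_diff_bound \<alpha> (deg G u)" if v: "v \<in> nbrs G u" for v
  proof -
    have "1 \<le> sqrt ?d"
      using deg[of u] by simp
    then have "gfun G E u v - gfun G E u w \<le> 2 * sqrt ?d" for w
      using g[of v] g[of w] unfolding abs_le_iff by linarith
    then have "gfun G E u v / \<alpha> - gfun G E u w / \<alpha> \<le> 2 * sqrt ?d / \<alpha>" for w
      using \<alpha> by (simp add: divide_right_mono flip: diff_divide_distrib)
    then have "exp (gfun G E u v / \<alpha>) / (\<Sum>w\<in>nbrs G u. exp (gfun G E u w / \<alpha>))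
        \<le> exp (2 * sqrt ?d / \<alpha>) / (real (card (nbrs G u)) - 1 + exp (2 * sqrt ?d / \<alpha>))"
      by (intro softmax_le[OF fin v])
    then have "Pstar G E \<alpha> u v \<le> exp (2 * sqrt ?d / \<alpha>) / (?d - 1 + exp (2 * sqrt ?d / \<alpha>))"
      using deg[of u] by (simp add: Pstar_eq_softmax deg_def)
    moreover have "0 \<le> Pstar G E \<alpha> u v"
      using deg[of u] by (simp add: Pstar_eq_softmax sum_nonneg)
    moreover have "\<bar>hfun G E u v\<bar> \<le> 1 + sqrt ?d"
      using abs_hfun_le[of E u v G] unit deg by simp
    ultimately show ?thesis
      unfolding dro_diff_bound_def by (intro mult_mono) auto
  qed
  moreover have "nbrs G u \<noteq> {}"
    using deg[of u] by (auto simp: deg_def)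
  ultimately show ?thesis
    using fin by simp
qed

lemma dro_bound_eq:
  "dro_bound \<alpha> d \<rho> k = sqrt (real d) * dro_diff_bound \<alpha> d * sqrt (1/2 * ln (real k / \<rho>))"
proof -
  have "real d + sqrt (real d) = sqrt (real d) * (1 + sqrt (real d))"
    by (simp add: algebra_simps)
  then show ?thesis
    by (simp add: dro_bound_def dro_diff_bound_def)
qed

lemma dro_bound_pos:
  assumes "d \<ge> 1" "0 < \<rho>" "\<rho> < real k"
  shows "dro_bound \<alpha> d \<rho> k > 0"
proof -
  have "ln (real k / \<rho>) > 0"
    using assms by simp
  then show ?thesis
    using assms(1) dro_diff_bound_pos by (simp add: dro_bound_eq)
qed

lemma exp_neg_dro_bound:
  assumes d: "d \<ge> 1" and \<rho>: "0 < \<rho>" "\<rho> \<le> real k"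
  shows "exp (-2 * (dro_bound \<alpha> d \<rho> k)\<^sup>2 / (real d * (dro_diff_bound \<alpha> d)\<^sup>2)) = \<rho> / real k"
proof -
  have "ln (real k / \<rho>) \<ge> 0"
    using \<rho> by simp
  then have "-2 * (dro_bound \<alpha> d \<rho> k)\<^sup>2 / (real d * (dro_diff_bound \<alpha> d)\<^sup>2) = - ln (real k / \<rho>)"
    using d dro_diff_bound_pos[OF d, of \<alpha>]
    by (simp add: dro_bound_eq power_mult_distrib field_simps)
  then show ?thesis
    using \<rho> by (simp add: exp_minus)
qed

lemma L_ideal_le_L_DRO_smooth:
  assumes "kl_ball_maximizer (nbrs G u) (unif_nbr G u) \<eta> (hfun G E u) (Pstar G E \<alpha> u)"
    and "is_dist (nbrs G u) Pid" "KL (nbrs G u) Pid (unif_nbr G u) \<le> \<eta>"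
  shows "L_ideal G E Pid u \<le> L_DRO_smooth G E \<alpha> u"
  using assms unfolding kl_ball_maximizer_def L_ideal_def L_DRO_smooth_def by blast

lemma (in prob_space) prob_L_ideal_exceeds_le:
  fixes G :: "('n \<times> 'n) set" and u :: 'n and E :: "'n \<Rightarrow> real ^ 'c"
    and X :: "nat \<Rightarrow> 'a \<Rightarrow> 'b" and F :: "(nat \<Rightarrow> 'b) \<Rightarrow> real"
  defines "Y \<equiv> \<lambda>\<omega>. \<lambda>i\<in>{..<deg G u}. X i \<omega>"
  assumes graph: "bipartite_graph G" and unit: "\<forall>w. norm (E w) = 1" and \<alpha>: "\<alpha> > 0"
    and opt: "kl_ball_maximizer (nbrs G u) (unif_nbr G u) \<eta> (hfun G E u) (Pstar G E \<alpha> u)"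
    and ideal: "is_dist (nbrs G u) Pid" "KL (nbrs G u) Pid (unif_nbr G u) \<le> \<eta>"
    and indep: "indep_vars (\<lambda>_. S) X {..<deg G u}"
    and F: "F \<in> borel_measurable (PiM {..<deg G u} (\<lambda>_. S))"
    and unbiased: "expectation (\<lambda>\<omega>. F (Y \<omega>)) = L_DRO_smooth G E \<alpha> u"
    and bd: "bounded_differences (deg G u) (\<lambda>_. space S) F
      (Max ((\<lambda>v. Pstar G E \<alpha> u v * \<bar>hfun G E u v\<bar>) ` nbrs G u))"
    and \<rho>: "0 < \<rho>" "\<rho> < real k"
  shows "prob {\<omega> \<in> space M. \<not> L_ideal G E Pid u \<le> F (Y \<omega>) + dro_bound \<alpha> (deg G u) \<rho> k}
    \<le> \<rho> / real k"
proof -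
  define d where "d = deg G u"
  define C where "C = dro_diff_bound \<alpha> d"
  define B where "B = dro_bound \<alpha> d \<rho> k"
  have d: "d \<ge> 1"
    using graph by (simp add: bipartite_graph_def d_def)
  have bd_C: "bounded_differences d (\<lambda>_. space S) F C"
    using bd Max_Pstar_abs_hfun_le[OF graph unit \<alpha>]
    unfolding bounded_differences_def C_def d_def by (meson order_trans)
  have "(\<lambda>\<omega>. F (Y \<omega>)) \<in> borel_measurable M"
    using measurable_comp[OF measurable_restrict_indep_vars[OF indep] F]
    by (simp add: Y_def comp_def)
  moreover have "{\<omega> \<in> space M. \<not> L_ideal G E Pid u \<le> F (Y \<omega>) + B}
      \<subseteq> {\<omega> \<in> space M. F (Y \<omega>) \<le> expectation (\<lambda>\<omega>. F (Y \<omega>)) - B}"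
    using L_ideal_le_L_DRO_smooth[OF opt ideal] unbiased by auto
  ultimately have "prob {\<omega> \<in> space M. \<not> L_ideal G E Pid u \<le> F (Y \<omega>) + B}
      \<le> prob {\<omega> \<in> space M. F (Y \<omega>) \<le> expectation (\<lambda>\<omega>. F (Y \<omega>)) - B}"
    by (intro finite_measure_mono) measurable
  also have "\<dots> \<le> exp (-2 * B\<^sup>2 / (real d * C\<^sup>2))"
    unfolding Y_def d_def
    using indep F bd_C d dro_bound_pos[OF d \<rho>] dro_diff_bound_pos[OF d]
    by (intro mcdiarmid_indep_vars) (auto simp: B_def C_def d_def)
  also have "\<dots> = \<rho> / real k"
    unfolding B_def C_def using d \<rho> by (intro exp_neg_dro_bound) auto
  finally show ?thesis
    by (simp add: B_def d_def)
qed

theorem theorem2: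
  fixes G :: "('n \<times> 'n) set" and u :: 'n
    and Emb :: "'m \<Rightarrow> 'n \<Rightarrow> real ^ 'c" and \<Theta> :: "'m set"
    and \<eta> \<alpha> \<rho> :: real and Pid :: "'n \<Rightarrow> real"
    and M :: "'a measure" and S :: "'b measure"
    and X :: "nat \<Rightarrow> 'a \<Rightarrow> 'b" and f :: "'m \<Rightarrow> (nat \<Rightarrow> 'b) \<Rightarrow> real"
  assumes graph: "bipartite_graph G"
    and eta: "\<eta> > 0" and alpha: "\<alpha> > 0" and rho: "0 < \<rho>" "\<rho> < 1"
    and fin: "finite \<Theta>"
    and unit: "\<forall>\<theta>\<in>\<Theta>. \<forall>w. norm (Emb \<theta> w) = 1"
    and opt: "\<forall>\<theta>\<in>\<Theta>. kl_ball_maximizer (nbrs G u) (unif_nbr G u) \<eta>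
                        (hfun G (Emb \<theta>) u) (Pstar G (Emb \<theta>) \<alpha> u)"
    and ideal: "is_dist (nbrs G u) Pid" "KL (nbrs G u) Pid (unif_nbr G u) \<le> \<eta>"
    and M: "prob_space M"
    and indep: "prob_space.indep_vars M (\<lambda>_. S) X {..<deg G u}"
    and meas: "\<forall>\<theta>\<in>\<Theta>. f \<theta> \<in> borel_measurable (PiM {..<deg G u} (\<lambda>_. S))"
    and unbiased: "\<forall>\<theta>\<in>\<Theta>. prob_space.expectation M
                      (\<lambda>\<omega>. f \<theta> (restrict (\<lambda>i. X i \<omega>) {..<deg G u}))
                    = L_DRO_smooth G (Emb \<theta>) \<alpha> u"
    and bdiff: "\<forall>\<theta>\<in>\<Theta>. \<forall>x \<in> PiE {..<deg G u} (\<lambda>_. space S).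
                  \<forall>y \<in> PiE {..<deg G u} (\<lambda>_. space S). \<forall>i < deg G u.
                    (\<forall>j \<in> {..<deg G u} - {i}. x j = y j) \<longrightarrow>
                    \<bar>f \<theta> x - f \<theta> y\<bar>
                      \<le> Max ((\<lambda>v. Pstar G (Emb \<theta>) \<alpha> u v * \<bar>hfun G (Emb \<theta>) u v\<bar>) ` nbrs G u)"
  shows "prob_space.prob M
           {\<omega> \<in> space M. \<forall>\<theta>\<in>\<Theta>.
              L_ideal G (Emb \<theta>) Pid u
                \<le> f \<theta> (restrict (\<lambda>i. X i \<omega>) {..<deg G u})
                   + dro_bound \<alpha> (deg G u) \<rho> (card \<Theta>)}
         \<ge> 1 - \<rho>"
proof -
  interpret M: prob_space M
    by (rule M)
  define Y where "Y \<omega> = (\<lambda>i\<in>{..<deg G u}. X i \<omega>)" for \<omega>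
  define B where "B = dro_bound \<alpha> (deg G u) \<rho> (card \<Theta>)"
  have "(\<lambda>\<omega>. f \<theta> (Y \<omega>)) \<in> borel_measurable M" if "\<theta> \<in> \<Theta>" for \<theta>
    using measurable_comp[OF M.measurable_restrict_indep_vars[OF indep] bspec[OF meas that]]
    by (simp add: Y_def comp_def)
  then have events: "{\<omega> \<in> space M. L_ideal G (Emb \<theta>) Pid u \<le> f \<theta> (Y \<omega>) + B} \<in> M.events"
    if "\<theta> \<in> \<Theta>" for \<theta>
    using that by measurable
  have "M.prob {\<omega> \<in> space M. \<not> L_ideal G (Emb \<theta>) Pid u \<le> f \<theta> (Y \<omega>) + B} \<le> \<rho> / real (card \<Theta>)"
    if \<theta>: "\<theta> \<in> \<Theta>" for \<theta>
  proof -
    have "1 \<le> real (card \<Theta>)"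
      using \<theta> fin by (auto simp: Suc_le_eq card_gt_0_iff)
    then have "\<rho> < real (card \<Theta>)"
      using rho by linarith
    then show ?thesis
      unfolding Y_def B_def using bspec[OF bdiff \<theta>] rho
      by (intro M.prob_L_ideal_exceeds_le[OF graph bspec[OF unit \<theta>] alpha bspec[OF opt \<theta>] ideal
            indep bspec[OF meas \<theta>] bspec[OF unbiased \<theta>]])
        (simp_all add: bounded_differences_def)
  qed
  with events have "1 - real (card \<Theta>) * (\<rho> / real (card \<Theta>))
      \<le> M.prob {\<omega> \<in> space M. \<forall>\<theta>\<in>\<Theta>. L_ideal G (Emb \<theta>) Pid u \<le> f \<theta> (Y \<omega>) + B}"
    by (rule M.prob_Ball_ge[OF fin])
  moreover have "real (card \<Theta>) * (\<rho> / real (card \<Theta>)) \<le> \<rho>"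
    using rho by (cases "card \<Theta> = 0") auto
  ultimately show ?thesis
    by (simp add: Y_def B_def)
qed

end
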